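(* Let $\mathcal X$ be finite with $|\mathcal X|\ge2$, $\mu\in\mathbb R^{\mathcal X}$, $\sigma\in(0,\infty)^{\mathcal X}$. On the probability simplex $\Delta(\mathcal X)$ define $$\mathcal W(p):=\sum_{x\in\mathcal X}p_x\Big(\mu_x+\sqrt{2\tilde I(p_x)}\,\sigma_x\Big)=\sum_{x\in\mathcal X}\big(p_x\mu_x+\phi(\Phi^{-1}(p_x))\,\sigma_x\big),$$ with the convention $\phi(\Phi^{-1}(0))=\phi(\Phi^{-1}(1))=0$. Then $\mathcal W$ is strictly concave on $\Delta(\mathcal X)$ and its unique maximizer over $\Delta(\mathcal X)$ is $q$ with $q_x=\Phi\big(\frac{\mu_x-\kappa^*}{\sigma_x}\big)$, where $\kappa^*\in\mathbb R$ is such that $\sum_x q_x=1$.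
   Context: $\Phi$ and $\phi$ denote the standard Gaussian CDF and PDF. The quasi-surprisal is $\tilde I(u):=\frac12\big(\phi(\Phi^{-1}(u))/u\big)^2$ for $u\in(0,1)$, so that $u\sqrt{2\tilde I(u)}=\phi(\Phi^{-1}(u))$. *)

theory Defs
  imports "HOL-Probability.Probability"
begin

definition std_normal_cdf :: "real \<Rightarrow> real" where
  "std_normal_cdf x = set_lebesgue_integral lborel {..x} std_normal_density"

definition std_normal_cdf_inv :: "real \<Rightarrow> real" where
  "std_normal_cdf_inv u = (THE x. std_normal_cdf x = u)"

definition quasi_surprisal :: "real \<Rightarrow> real" where
  "quasi_surprisal u = (std_normal_density (std_normal_cdf_inv u) / u)^2 / 2"

definition phi_Phi_inv :: "real \<Rightarrow> real" where
  "phi_Phi_inv u = (if 0 < u \<and> u < 1 then std_normal_density (std_normal_cdf_inv u) else 0)"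

definition prob_simplex :: "('x::finite \<Rightarrow> real) set" where
  "prob_simplex = {p. (\<forall>x. 0 \<le> p x) \<and> (\<Sum>x\<in>UNIV. p x) = 1}"

definition welfare :: "('x::finite \<Rightarrow> real) \<Rightarrow> ('x \<Rightarrow> real) \<Rightarrow> ('x \<Rightarrow> real) \<Rightarrow> real" where
  "welfare \<mu> \<sigma> p = (\<Sum>x\<in>UNIV. p x * \<mu> x + phi_Phi_inv (p x) * \<sigma> x)"

definition strictly_concave_on :: "('x \<Rightarrow> real) set \<Rightarrow> (('x \<Rightarrow> real) \<Rightarrow> real) \<Rightarrow> bool" where
  "strictly_concave_on S f \<longleftrightarrow> (\<forall>p\<in>S. \<forall>q\<in>S. \<forall>t. p \<noteq> q \<and> 0 < t \<and> t < 1 \<longrightarrow>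
      f (\<lambda>x. (1 - t) * p x + t * q x) > (1 - t) * f p + t * f q)"

end

theory Submission
  imports Defs "HOL-Real_Asymp.Real_Asymp"
begin

text \<open>
  Write \<open>G = phi_Phi_inv\<close>. Along the curve \<open>v = \<Phi>(b)\<close> we have \<open>G(v) = \<phi>(b)\<close>,
  so \<open>G(v) + a v = \<phi>(b) + a \<Phi>(b)\<close>, whose derivative \<open>(a - b) \<phi>(b)\<close> changes sign only
  at \<open>b = a\<close>; its limits \<open>0\<close> and \<open>a\<close> at \<open>\<mp>\<infinity>\<close> are the values at \<open>v = 0\<close> and \<open>v = 1\<close>.
  Hence on \<open>[0, 1]\<close> the function \<open>G\<close> lies strictly below each of its tangent lines
  \<open>v \<mapsto> \<phi>(a) - a (v - \<Phi>(a))\<close> except at the point of contact. Strict concavity of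
  \<open>W\<close> follows coordinatewise. Taking \<open>a\<^sub>x = (\<mu>\<^sub>x - \<kappa>)/\<sigma>\<^sub>x\<close> and summing the tangent
  inequalities weighted by \<open>\<sigma>\<^sub>x\<close>, the terms in \<open>\<kappa>\<close> cancel on the simplex since
  \<open>\<Sum>\<^sub>x q\<^sub>x = 1\<close>, so \<open>W(p) < W(q)\<close> for every \<open>p \<noteq> q\<close>. A suitable \<open>\<kappa>\<close> exists by the
  intermediate value theorem, the sum \<open>\<Sum>\<^sub>x q\<^sub>x\<close> decreasing from \<open>|X| \<ge> 2\<close> to \<open>0\<close>.
\<close>

interpretation std_normal: real_distribution std_normal_distribution
  by (rule real_dist_normal_dist)

lemma std_normal_cdf_eq_cdf: "std_normal_cdf x = cdf std_normal_distribution x"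
proof -
  have "cdf std_normal_distribution x = integral\<^sup>L std_normal_distribution (indicator {..x})"
    by (simp add: cdf_def measure_def)
  also have "\<dots> = integral\<^sup>L lborel (\<lambda>y. std_normal_density y *\<^sub>R indicator {..x} y)"
    by (rule integral_density) auto
  also have "\<dots> = std_normal_cdf x"
    unfolding std_normal_cdf_def set_lebesgue_integral_def by (simp add: mult.commute)
  finally show ?thesis by simp
qed

lemma std_normal_cdf_at_top: "(std_normal_cdf \<longlongrightarrow> 1) at_top"
  using std_normal.cdf_lim_at_top_prob by (simp add: std_normal_cdf_eq_cdf[abs_def])

lemma std_normal_cdf_at_bot: "(std_normal_cdf \<longlongrightarrow> 0) at_bot"
  using std_normal.cdf_lim_at_bot by (simp add: std_normal_cdf_eq_cdf[abs_def])

lemma std_normal_cdf_nonneg: "0 \<le> std_normal_cdf x"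
  by (simp add: std_normal_cdf_eq_cdf std_normal.cdf_nonneg)

lemma std_normal_cdf_le_1: "std_normal_cdf x \<le> 1"
  by (simp add: std_normal_cdf_eq_cdf std_normal.cdf_bounded_prob)

lemma std_normal_density_pos: "0 < std_normal_density x"
  by (rule normal_density_pos) simp

lemma std_normal_density_has_real_derivative:
  "(std_normal_density has_real_derivative - x * std_normal_density x) (at x)"
  unfolding std_normal_density_def
  by (auto intro!: derivative_eq_intros simp: power2_eq_square field_simps)

lemma std_normal_density_at_bot: "(std_normal_density \<longlongrightarrow> 0) at_bot"
  unfolding std_normal_density_def by real_asymp

lemma std_normal_density_at_top: "(std_normal_density \<longlongrightarrow> 0) at_top"
  unfolding std_normal_density_def by real_asymp

lemma std_normal_cdf_has_real_derivative:
  "(std_normal_cdf has_real_derivative std_normal_density x) (at x)"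
proof -
  have integrable: "interval_lebesgue_integrable lborel a b std_normal_density" for a b
    unfolding interval_lebesgue_integrable_def set_integrable_def
    using integrable_mult_indicator[of "einterval a b" lborel std_normal_density]
      integrable_mult_indicator[of "einterval b a" lborel std_normal_density]
    by auto
  have lower_tail: "std_normal_cdf u = (LBINT y=-\<infinity>..ereal u. std_normal_density y)" for u
    unfolding std_normal_cdf_def
    by (subst interval_integral_Ioc') (auto intro!: arg_cong2[where f="set_lebesgue_integral lborel"])
  have split: "std_normal_cdf u = std_normal_cdf 0 + (LBINT y=ereal 0..ereal u. std_normal_density y)" for u
    unfolding lower_tail zero_ereal_def by (rule interval_integral_sum[symmetric], rule integrable)
  have "continuous_on UNIV std_normal_density"
    unfolding std_normal_density_def by (intro continuous_intros) auto
  then have "((\<lambda>u. LBINT y=ereal 0..ereal u. std_normal_density y) has_vector_derivative std_normal_density x)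
      (at x within {-\<bar>x\<bar>-1..\<bar>x\<bar>+1})"
    by (intro interval_integral_FTC2) (auto intro: continuous_on_subset)
  then have ftc: "((\<lambda>u. LBINT y=ereal 0..ereal u. std_normal_density y) has_real_derivative std_normal_density x) (at x)"
    by (subst (asm) at_within_Icc_at) (auto simp: has_real_derivative_iff_has_vector_derivative)
  from DERIV_add[OF DERIV_const ftc, of "std_normal_cdf 0"] show ?thesis
    by (simp only: split[symmetric] add_0)
qed

lemma isCont_std_normal_cdf: "isCont std_normal_cdf x"
  by (rule DERIV_isCont[OF std_normal_cdf_has_real_derivative])

lemma continuous_on_std_normal_cdf [continuous_intros]:
  "continuous_on S f \<Longrightarrow> continuous_on S (\<lambda>x. std_normal_cdf (f x))"
  by (rule continuous_on_compose2[of UNIV std_normal_cdf])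
    (auto simp: continuous_at_imp_continuous_on isCont_std_normal_cdf)

lemma strict_mono_std_normal_cdf: "strict_mono std_normal_cdf"
proof (rule strict_monoI)
  fix a b :: real
  assume "a < b"
  then show "std_normal_cdf a < std_normal_cdf b"
    by (rule DERIV_pos_imp_increasing)
      (auto intro: std_normal_cdf_has_real_derivative std_normal_density_pos)
qed

lemma std_normal_cdf_pos: "0 < std_normal_cdf x"
proof -
  have "std_normal_cdf (x - 1) < std_normal_cdf x"
    by (rule strict_monoD[OF strict_mono_std_normal_cdf]) simp
  then show ?thesis
    using std_normal_cdf_nonneg[of "x - 1"] by linarith
qed

lemma std_normal_cdf_less_1: "std_normal_cdf x < 1"
proof -
  have "std_normal_cdf x < std_normal_cdf (x + 1)"
    by (rule strict_monoD[OF strict_mono_std_normal_cdf]) simp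
  then show ?thesis
    using std_normal_cdf_le_1[of "x + 1"] by linarith
qed

lemma std_normal_cdf_surj:
  assumes "0 < v" "v < 1"
  obtains x where "std_normal_cdf x = v"
proof -
  have "eventually (\<lambda>x. std_normal_cdf x < v) at_bot"
    using std_normal_cdf_at_bot assms(1) by (rule order_tendstoD)
  then obtain x1 where x1: "std_normal_cdf x1 < v"
    by (auto simp: eventually_at_bot_linorder)
  have "eventually (\<lambda>x. v < std_normal_cdf x) at_top"
    using std_normal_cdf_at_top assms(2) by (rule order_tendstoD)
  then obtain x2 where x2: "v < std_normal_cdf x2"
    by (auto simp: eventually_at_top_linorder)
  have "x1 < x2"
    using x1 x2 strict_mono_less[OF strict_mono_std_normal_cdf, of x1 x2] by linarith
  moreover have "continuous_on {x1..x2} std_normal_cdf"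
    by (simp add: continuous_at_imp_continuous_on isCont_std_normal_cdf)
  ultimately show ?thesis
    using IVT'[of std_normal_cdf x1 v x2] x1 x2 that by (auto simp: less_imp_le)
qed

lemma std_normal_cdf_inv_cdf [simp]: "std_normal_cdf_inv (std_normal_cdf x) = x"
  unfolding std_normal_cdf_inv_def
  using strict_mono_eq[OF strict_mono_std_normal_cdf] by simp

lemma phi_Phi_inv_std_normal_cdf [simp]:
  "phi_Phi_inv (std_normal_cdf x) = std_normal_density x"
  by (simp add: phi_Phi_inv_def std_normal_cdf_pos std_normal_cdf_less_1)

definition normal_lagrangian :: "real \<Rightarrow> real \<Rightarrow> real" where
  "normal_lagrangian a b = std_normal_density b + a * std_normal_cdf b"

lemma normal_lagrangian_has_real_derivative:
  "(normal_lagrangian a has_real_derivative (a - b) * std_normal_density b) (at b)"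
  unfolding normal_lagrangian_def[abs_def]
  by (auto intro!: derivative_eq_intros std_normal_density_has_real_derivative
      std_normal_cdf_has_real_derivative simp: algebra_simps)

lemma continuous_on_normal_lagrangian: "continuous_on S (normal_lagrangian a)"
  by (meson DERIV_isCont continuous_at_imp_continuous_on normal_lagrangian_has_real_derivative)

lemma normal_lagrangian_strict_mono_below:
  assumes "b < c" "c \<le> a"
  shows "normal_lagrangian a b < normal_lagrangian a c"
proof (rule DERIV_pos_imp_increasing_open[OF assms(1)])
  fix x
  assume "b < x" "x < c"
  then have "0 < (a - x) * std_normal_density x"
    using assms std_normal_density_pos by (intro mult_pos_pos) auto
  with normal_lagrangian_has_real_derivative
  show "\<exists>y. DERIV (normal_lagrangian a) x :> y \<and> 0 < y"
    by blast
qed (rule continuous_on_normal_lagrangian)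

lemma normal_lagrangian_strict_antimono_above:
  assumes "a \<le> c" "c < b"
  shows "normal_lagrangian a b < normal_lagrangian a c"
proof (rule DERIV_neg_imp_decreasing_open[OF assms(2)])
  fix x
  assume "c < x" "x < b"
  then have "(a - x) * std_normal_density x < 0"
    using assms std_normal_density_pos by (intro mult_neg_pos) auto
  with normal_lagrangian_has_real_derivative
  show "\<exists>y. DERIV (normal_lagrangian a) x :> y \<and> y < 0"
    by blast
qed (rule continuous_on_normal_lagrangian)

lemma normal_lagrangian_at_bot: "(normal_lagrangian a \<longlongrightarrow> 0) at_bot"
  unfolding normal_lagrangian_def[abs_def]
  using tendsto_add[OF std_normal_density_at_bot tendsto_mult[OF tendsto_const std_normal_cdf_at_bot]]
  by simp

lemma normal_lagrangian_at_top: "(normal_lagrangian a \<longlongrightarrow> a) at_top"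
  unfolding normal_lagrangian_def[abs_def]
  using tendsto_add[OF std_normal_density_at_top tendsto_mult[OF tendsto_const std_normal_cdf_at_top]]
  by simp

lemma normal_lagrangian_max_gt_0: "0 < normal_lagrangian a a"
proof -
  have "0 \<le> normal_lagrangian a (a - 1)"
  proof (rule tendsto_upperbound[OF normal_lagrangian_at_bot])
    show "eventually (\<lambda>b. normal_lagrangian a b \<le> normal_lagrangian a (a - 1)) at_bot"
      unfolding eventually_at_bot_linorder
      by (auto intro!: exI[of _ "a - 1"] less_imp_le normal_lagrangian_strict_mono_below simp: le_less)
  qed simp
  also have "\<dots> < normal_lagrangian a a"
    by (rule normal_lagrangian_strict_mono_below) auto
  finally show ?thesis .
qed

lemma normal_lagrangian_max_gt: "a < normal_lagrangian a a"
proof -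
  have "a \<le> normal_lagrangian a (a + 1)"
  proof (rule tendsto_upperbound[OF normal_lagrangian_at_top])
    show "eventually (\<lambda>b. normal_lagrangian a b \<le> normal_lagrangian a (a + 1)) at_top"
      unfolding eventually_at_top_linorder
      by (auto intro!: exI[of _ "a + 1"] less_imp_le normal_lagrangian_strict_antimono_above simp: le_less)
  qed simp
  also have "\<dots> < normal_lagrangian a a"
    by (rule normal_lagrangian_strict_antimono_above) auto
  finally show ?thesis .
qed

lemma phi_Phi_inv_less_tangent:
  assumes "0 \<le> v" "v \<le> 1" "v \<noteq> std_normal_cdf a"
  shows "phi_Phi_inv v < std_normal_density a - a * (v - std_normal_cdf a)"
proof -
  consider "v = 0" | "v = 1" | "0 < v" "v < 1"
    using assms by linarith
  then show ?thesis
  proof cases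
    case 1
    then show ?thesis
      using normal_lagrangian_max_gt_0[of a] by (simp add: normal_lagrangian_def phi_Phi_inv_def)
  next
    case 2
    then show ?thesis
      using normal_lagrangian_max_gt[of a] by (simp add: normal_lagrangian_def phi_Phi_inv_def algebra_simps)
  next
    case 3
    then obtain b where b: "std_normal_cdf b = v"
      by (rule std_normal_cdf_surj)
    with assms have "b \<noteq> a" by auto
    then have "normal_lagrangian a b < normal_lagrangian a a"
      using normal_lagrangian_strict_mono_below[of b a a] normal_lagrangian_strict_antimono_above[of a a b]
      by (cases "b < a") auto
    then show ?thesis
      using b by (auto simp: normal_lagrangian_def algebra_simps)
  qed
qed

lemma phi_Phi_inv_strict_concave:
  assumes "0 \<le> u" "u \<le> 1" "0 \<le> v" "v \<le> 1" "u \<noteq> v" "0 < t" "t < 1"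
  shows "(1 - t) * phi_Phi_inv u + t * phi_Phi_inv v < phi_Phi_inv ((1 - t) * u + t * v)"
proof -
  define w where "w = (1 - t) * u + t * v"
  have "0 < w" "w < 1"
    using assms unfolding w_def
    by (smt (verit) mult_pos_pos mult_nonneg_nonneg mult_less_cancel_left1 mult_le_cancel_left1)+
  then obtain c where c: "std_normal_cdf c = w"
    by (rule std_normal_cdf_surj)
  have "w - u = t * (v - u)" "w - v = (1 - t) * (u - v)"
    unfolding w_def by (simp_all add: algebra_simps)
  then have "u \<noteq> w" "v \<noteq> w"
    using assms by auto
  then have "phi_Phi_inv u < std_normal_density c - c * (u - w)"
    and "phi_Phi_inv v < std_normal_density c - c * (v - w)"
    using phi_Phi_inv_less_tangent[of _ c] assms c by auto
  then have "(1 - t) * phi_Phi_inv u + t * phi_Phi_inv v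
      < (1 - t) * (std_normal_density c - c * (u - w)) + t * (std_normal_density c - c * (v - w))"
    using assms by (intro add_strict_mono mult_strict_left_mono) auto
  also have "\<dots> = std_normal_density c"
    unfolding w_def by (simp add: algebra_simps)
  also have "\<dots> = phi_Phi_inv w"
    by (simp flip: c)
  finally show ?thesis
    by (simp add: w_def)
qed

lemma prob_simplex_bounds: "p \<in> prob_simplex \<Longrightarrow> 0 \<le> p x \<and> p x \<le> 1"
  unfolding prob_simplex_def
  using member_le_sum[of x UNIV p] by auto

lemma welfare_strictly_concave:
  assumes "\<forall>x. 0 < \<sigma> x"
  shows "strictly_concave_on prob_simplex (welfare \<mu> \<sigma>)"
  unfolding strictly_concave_on_def
proof (intro ballI allI impI)
  fix p q :: "'a \<Rightarrow> real" and t :: real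
  assume p: "p \<in> prob_simplex" and q: "q \<in> prob_simplex" and pqt: "p \<noteq> q \<and> 0 < t \<and> t < 1"
  define m where "m x = (1 - t) * p x + t * q x" for x
  define f where "f r x = r x * \<mu> x + phi_Phi_inv (r x) * \<sigma> x" for r :: "'a \<Rightarrow> real" and x
  have gap: "f m x - ((1 - t) * f p x + t * f q x)
      = \<sigma> x * (phi_Phi_inv (m x) - ((1 - t) * phi_Phi_inv (p x) + t * phi_Phi_inv (q x)))" for x
    unfolding f_def m_def by (simp add: algebra_simps)
  have strict: "(1 - t) * f p x + t * f q x < f m x" if "p x \<noteq> q x" for x
  proof -
    have "0 < \<sigma> x * (phi_Phi_inv (m x) - ((1 - t) * phi_Phi_inv (p x) + t * phi_Phi_inv (q x)))"
      unfolding m_def using assms pqt that prob_simplex_bounds[OF p] prob_simplex_bounds[OF q]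
      by (intro mult_pos_pos) (auto simp: phi_Phi_inv_strict_concave)
    then show ?thesis using gap[of x] by linarith
  qed
  have "(1 - t) * f p x + t * f q x \<le> f m x" for x
    by (cases "p x = q x") (auto simp: f_def m_def algebra_simps dest: strict)
  moreover obtain x where "p x \<noteq> q x"
    using pqt by auto
  ultimately have "(\<Sum>x\<in>UNIV. (1 - t) * f p x + t * f q x) < (\<Sum>x\<in>UNIV. f m x)"
    by (intro sum_strict_mono_ex1) (auto intro: strict)
  then show "(1 - t) * welfare \<mu> \<sigma> p + t * welfare \<mu> \<sigma> q
      < welfare \<mu> \<sigma> (\<lambda>x. (1 - t) * p x + t * q x)"
    unfolding welfare_def f_def m_def by (simp add: sum_distrib_left sum.distrib distrib_left)
qed

lemma welfare_term_less_tangent: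
  fixes m s \<kappa> v :: real
  defines "w \<equiv> std_normal_cdf ((m - \<kappa>) / s)"
  assumes "0 < s" "0 \<le> v" "v \<le> 1" "v \<noteq> w"
  shows "v * m + phi_Phi_inv v * s < w * m + phi_Phi_inv w * s + \<kappa> * (v - w)"
proof -
  let ?a = "(m - \<kappa>) / s"
  have "s * phi_Phi_inv v < s * (std_normal_density ?a - ?a * (v - w))"
    using assms phi_Phi_inv_less_tangent[of v ?a] by simp
  also have "\<dots> = s * std_normal_density ?a - (m - \<kappa>) * (v - w)"
    using \<open>0 < s\<close> by (simp add: field_simps)
  finally show ?thesis
    by (simp add: w_def algebra_simps)
qed

lemma welfare_less_welfare_normal_quantiles:
  fixes \<mu> \<sigma> :: "'x::finite \<Rightarrow> real" and \<kappa> :: real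
  defines "q \<equiv> \<lambda>x. std_normal_cdf ((\<mu> x - \<kappa>) / \<sigma> x)"
  assumes "\<forall>x. 0 < \<sigma> x" "(\<Sum>x\<in>UNIV. q x) = 1" "p \<in> prob_simplex" "p \<noteq> q"
  shows "welfare \<mu> \<sigma> p < welfare \<mu> \<sigma> q"
proof -
  define f where "f r x = r x * \<mu> x + phi_Phi_inv (r x) * \<sigma> x" for r :: "'x \<Rightarrow> real" and x
  have strict: "f p x < f q x + \<kappa> * (p x - q x)" if "p x \<noteq> q x" for x
    unfolding f_def q_def
    using welfare_term_less_tangent assms prob_simplex_bounds that by blast
  have "f p x \<le> f q x + \<kappa> * (p x - q x)" for x
    by (cases "p x = q x") (auto simp: f_def dest: strict)
  moreover obtain x where "p x \<noteq> q x"
    using \<open>p \<noteq> q\<close> by auto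
  ultimately have "(\<Sum>x\<in>UNIV. f p x) < (\<Sum>x\<in>UNIV. f q x + \<kappa> * (p x - q x))"
    by (intro sum_strict_mono_ex1) (auto intro: strict)
  also have "\<dots> = (\<Sum>x\<in>UNIV. f q x) + \<kappa> * ((\<Sum>x\<in>UNIV. p x) - (\<Sum>x\<in>UNIV. q x))"
    by (simp add: sum.distrib sum_distrib_left sum_subtractf right_diff_distrib)
  also have "\<dots> = (\<Sum>x\<in>UNIV. f q x)"
    using assms by (simp add: prob_simplex_def)
  finally show ?thesis
    unfolding welfare_def f_def .
qed

lemma filterlim_shifted_quotient_at_bot_at_top:
  fixes m s :: real
  assumes "0 < s"
  shows "filterlim (\<lambda>k. (m - k) / s) at_bot at_top"
  unfolding filterlim_at_bot eventually_at_top_linorder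
proof
  fix Z
  have "\<forall>k \<ge> m - s * Z. (m - k) / s \<le> Z"
    using assms by (auto simp: divide_le_eq algebra_simps)
  then show "\<exists>N. \<forall>k\<ge>N. (m - k) / s \<le> Z"
    by blast
qed

lemma filterlim_shifted_quotient_at_top_at_bot:
  fixes m s :: real
  assumes "0 < s"
  shows "filterlim (\<lambda>k. (m - k) / s) at_top at_bot"
  unfolding filterlim_at_top eventually_at_bot_linorder
proof
  fix Z
  have "\<forall>k \<le> m - s * Z. Z \<le> (m - k) / s"
    using assms by (auto simp: le_divide_eq algebra_simps)
  then show "\<exists>N. \<forall>k\<le>N. Z \<le> (m - k) / s"
    by blast
qed

lemma ex_sum_normal_quantiles_eq_1:
  fixes \<mu> \<sigma> :: "'x::finite \<Rightarrow> real"
  assumes "CARD('x) \<ge> 2" "\<forall>x. 0 < \<sigma> x"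
  shows "\<exists>\<kappa>. (\<Sum>x\<in>UNIV. std_normal_cdf ((\<mu> x - \<kappa>) / \<sigma> x)) = 1"
proof -
  define F where "F \<kappa> = (\<Sum>x\<in>UNIV. std_normal_cdf ((\<mu> x - \<kappa>) / \<sigma> x))" for \<kappa>
  have lim_at_bot: "((\<lambda>\<kappa>. std_normal_cdf ((\<mu> x - \<kappa>) / \<sigma> x)) \<longlongrightarrow> 1) at_bot" for x
    using assms(2) by (intro filterlim_compose[OF std_normal_cdf_at_top]
        filterlim_shifted_quotient_at_top_at_bot) auto
  have "(F \<longlongrightarrow> (\<Sum>x::'x\<in>UNIV. 1)) at_bot"
    unfolding F_def by (intro tendsto_sum lim_at_bot)
  then have "eventually (\<lambda>\<kappa>. 1 < F \<kappa>) at_bot"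
    using assms(1) by (intro order_tendstoD) auto
  then obtain k1 where k1: "\<And>\<kappa>. \<kappa> \<le> k1 \<Longrightarrow> 1 < F \<kappa>"
    by (auto simp: eventually_at_bot_linorder)
  have lim_at_top: "((\<lambda>\<kappa>. std_normal_cdf ((\<mu> x - \<kappa>) / \<sigma> x)) \<longlongrightarrow> 0) at_top" for x
    using assms(2) by (intro filterlim_compose[OF std_normal_cdf_at_bot]
        filterlim_shifted_quotient_at_bot_at_top) auto
  have "(F \<longlongrightarrow> (\<Sum>x::'x\<in>UNIV. 0)) at_top"
    unfolding F_def by (intro tendsto_sum lim_at_top)
  then have "eventually (\<lambda>\<kappa>. F \<kappa> < 1) at_top"
    by (intro order_tendstoD) auto
  then obtain k2 where k2: "\<And>\<kappa>. k2 \<le> \<kappa> \<Longrightarrow> F \<kappa> < 1"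
    by (auto simp: eventually_at_top_linorder)
  have "continuous_on {k1..max k1 k2} F"
    unfolding F_def using assms(2) by (intro continuous_intros) (auto simp: less_imp_neq[symmetric])
  then have "\<exists>\<kappa>. F \<kappa> = 1"
    using IVT2'[of F "max k1 k2" 1 k1] k1[of k1] k2[of "max k1 k2"] by (auto simp: less_imp_le)
  then show ?thesis
    unfolding F_def .
qed

theorem proposition4:
  fixes \<mu> \<sigma> :: "'x::finite \<Rightarrow> real"
  assumes "CARD('x) \<ge> 2"
    and "\<forall>x. \<sigma> x > 0"
  shows "strictly_concave_on prob_simplex (welfare \<mu> \<sigma>)
    \<and> (\<exists>\<kappa>. (\<Sum>x\<in>UNIV. std_normal_cdf ((\<mu> x - \<kappa>) / \<sigma> x)) = 1)
    \<and> (\<forall>\<kappa>. (\<Sum>x\<in>UNIV. std_normal_cdf ((\<mu> x - \<kappa>) / \<sigma> x)) = 1 \<longrightarrow>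
         {p \<in> prob_simplex. \<forall>p'\<in>prob_simplex. welfare \<mu> \<sigma> p' \<le> welfare \<mu> \<sigma> p}
           = {(\<lambda>x. std_normal_cdf ((\<mu> x - \<kappa>) / \<sigma> x))})"
proof (intro conjI allI impI)
  show "strictly_concave_on prob_simplex (welfare \<mu> \<sigma>)"
    using assms(2) by (rule welfare_strictly_concave)
  show "\<exists>\<kappa>. (\<Sum>x\<in>UNIV. std_normal_cdf ((\<mu> x - \<kappa>) / \<sigma> x)) = 1"
    using assms by (rule ex_sum_normal_quantiles_eq_1)
  fix \<kappa>
  let ?q = "\<lambda>x. std_normal_cdf ((\<mu> x - \<kappa>) / \<sigma> x)"
  assume normalized: "(\<Sum>x\<in>UNIV. ?q x) = 1"
  then have "?q \<in> prob_simplex"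
    by (simp add: prob_simplex_def std_normal_cdf_nonneg)
  moreover have "welfare \<mu> \<sigma> p < welfare \<mu> \<sigma> ?q" if "p \<in> prob_simplex" "p \<noteq> ?q" for p
    using welfare_less_welfare_normal_quantiles assms(2) normalized that by blast
  ultimately show "{p \<in> prob_simplex. \<forall>p'\<in>prob_simplex. welfare \<mu> \<sigma> p' \<le> welfare \<mu> \<sigma> p} = {?q}"
    by (force simp: not_le[symmetric])
qed

end
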